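(* Let $X$ be a complex Banach space and let $T\in\mathcal{B}(X)$ be a power-bounded operator such that $\sigma(T)\cap\mathbb{T}=\{1\}$. Let $m:(0,\pi]\to(0,\infty)$ be defined by $m(\theta)=\sup\{\|R(\mathrm{e}^{\mathrm{i}\vartheta},T)\|:\theta\leq|\vartheta|\leq\pi\}$. Suppose that $$\lim_{\theta\to0}\max\big\{\|\theta R(\mathrm{e}^{\mathrm{i}\theta},T)\|,\|\theta R(\mathrm{e}^{-\mathrm{i}\theta},T)\|\big\}=\infty.$$ Then, given any right-inverse $m^{-1}$ of $m$ (defined on the range of $m$), there exist constants $c,C>0$ such that $\|T^n(I-T)\|\geq c\, m^{-1}(Cn)$ for all sufficiently large $n\geq0$.
   Context: $T$ is power-bounded if $\sup_{n\geq0}\|T^n\|<\infty$; $\mathbb{T}$ is the unit circle; $R(\lambda,T)=(\lambda-T)^{-1}$. The function $m$ is continuous and decreasing; a right-inverse $m^{-1}$ is a function on the range of $m$ with $m(m^{-1}(s))=s$. *)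

theory Defs
  imports "HOL-Analysis.Analysis"
begin

text \<open>Complex vector spaces: HOL-Analysis only has real vector spaces, so we
  add complex scalar multiplication compatible with the real one.\<close>

class complex_vector = real_vector +
  fixes scaleC :: "complex \<Rightarrow> 'a \<Rightarrow> 'a"  (infixr \<open>*\<^sub>C\<close> 75)
  assumes scaleC_add_right: "a *\<^sub>C (x + y) = a *\<^sub>C x + a *\<^sub>C y"
    and scaleC_add_left: "(a + b) *\<^sub>C x = a *\<^sub>C x + b *\<^sub>C x"
    and scaleC_scaleC: "a *\<^sub>C (b *\<^sub>C x) = (a * b) *\<^sub>C x"
    and scaleC_one: "1 *\<^sub>C x = x"
    and scaleC_of_real: "(complex_of_real r) *\<^sub>C x = r *\<^sub>R x"

class complex_normed_vector = complex_vector + real_normed_vector +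
  assumes norm_scaleC: "norm (a *\<^sub>C x) = cmod a * norm x"

class complex_banach = complex_normed_vector + complete_space

definition bounded_clinear_op :: "('a::complex_normed_vector \<Rightarrow> 'a) \<Rightarrow> bool" where
  "bounded_clinear_op T \<longleftrightarrow> bounded_linear T \<and> (\<forall>c x. T (c *\<^sub>C x) = c *\<^sub>C T x)"

definition is_resolvent :: "('a::complex_normed_vector \<Rightarrow> 'a) \<Rightarrow> complex \<Rightarrow> ('a \<Rightarrow> 'a) \<Rightarrow> bool" where
  "is_resolvent T l S \<longleftrightarrow> (\<forall>x. S (l *\<^sub>C x - T x) = x) \<and> (\<forall>x. l *\<^sub>C S x - T (S x) = x)"

definition resolvent_set :: "('a::complex_normed_vector \<Rightarrow> 'a) \<Rightarrow> complex set" where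
  "resolvent_set T = {l. \<exists>S. bounded_clinear_op S \<and> is_resolvent T l S}"

definition spectrum :: "('a::complex_normed_vector \<Rightarrow> 'a) \<Rightarrow> complex set" where
  "spectrum T = - resolvent_set T"

definition resolvent :: "complex \<Rightarrow> ('a::complex_normed_vector \<Rightarrow> 'a) \<Rightarrow> ('a \<Rightarrow> 'a)" where
  "resolvent l T = (THE S. is_resolvent T l S)"

definition power_bounded :: "('a::real_normed_vector \<Rightarrow> 'a) \<Rightarrow> bool" where
  "power_bounded T \<longleftrightarrow> (\<exists>M. \<forall>n. onorm (T ^^ n) \<le> M)"

definition resolvent_growth :: "('a::complex_normed_vector \<Rightarrow> 'a) \<Rightarrow> real \<Rightarrow> real" where
  "resolvent_growth T \<theta> = Sup {onorm (resolvent (cis t) T) | t. \<theta> \<le> \<bar>t\<bar> \<and> \<bar>t\<bar> \<le> pi}"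

instantiation complex :: complex_banach
begin
definition "scaleC_complex = ((*) :: complex \<Rightarrow> complex \<Rightarrow> complex)"
instance by standard (auto simp: scaleC_complex_def algebra_simps norm_mult scaleR_conv_of_real)
end

end

theory Submission
  imports Defs
begin

text \<open>
  For \<open>|\<lambda>| = 1\<close> one has \<open>(\<lambda> - 1) T^n R(\<lambda>) = T^n - T^n(I - T) R(\<lambda>)\<close>, while \<open>(\<lambda>^n - T^n) R(\<lambda>)\<close>
  telescopes to a sum of \<open>n\<close> powers of \<open>T\<close>. With \<open>K = sup \<parallel>T^k\<parallel>\<close> this gives
  \<open>\<parallel>R(\<lambda>,T)\<parallel> \<le> 2K (n + 1/|\<lambda> - 1|)\<close> as soon as \<open>\<parallel>T^n(I - T)\<parallel> \<le> |\<lambda> - 1|/2\<close>.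
  Put \<open>\<theta> = m^{-1}(4Kn)\<close>. If \<open>\<parallel>T^n(I - T)\<parallel> < \<theta>/8\<close>, the bound applies on the whole arc
  \<open>\<theta> \<le> |t| \<le> \<pi>\<close> (where \<open>|e^{it} - 1| \<ge> |t|/4\<close>), so \<open>4Kn = m(\<theta>) \<le> 2K(n + 4/\<theta>)\<close>, i.e. \<open>n\<theta> \<le> 4\<close>,
  and then \<open>\<theta> \<parallel>R(e^{\<plusminus>i\<theta>},T)\<parallel> \<le> 16K\<close> at some \<open>\<theta> \<le> 4/n\<close>, contradicting the blow-up for large \<open>n\<close>.
  That \<open>4Kn\<close> lies in the range of \<open>m\<close> at all follows from the continuity of
  \<open>\<lambda> \<mapsto> \<parallel>R(\<lambda>,T)\<parallel>\<close> together with the blow-up.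
\<close>

lemma scaleC_diff_right: "(a::complex) *\<^sub>C ((x::'a::complex_vector) - y) = a *\<^sub>C x - a *\<^sub>C y"
  by (metis add_diff_cancel diff_add_cancel scaleC_add_right)

lemma scaleC_diff_left: "((a::complex) - b) *\<^sub>C (x::'a::complex_vector) = a *\<^sub>C x - b *\<^sub>C x"
  by (metis add_diff_cancel diff_add_cancel scaleC_add_left)

lemma bounded_clinear_op_bounded_linear: "bounded_clinear_op S \<Longrightarrow> bounded_linear S"
  by (simp add: bounded_clinear_op_def)

lemma bounded_clinear_op_scaleC: "bounded_clinear_op S \<Longrightarrow> S (c *\<^sub>C x) = c *\<^sub>C S x"
  by (simp add: bounded_clinear_op_def)

lemma bounded_clinear_op_add: "bounded_clinear_op S \<Longrightarrow> S (x + y) = S x + S y"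
  by (simp add: bounded_clinear_op_def linear_add bounded_linear.linear)

lemma bounded_clinear_op_diff: "bounded_clinear_op S \<Longrightarrow> S (x - y) = S x - S y"
  by (simp add: bounded_clinear_op_def linear_diff bounded_linear.linear)

lemma bounded_clinear_op_funpow:
  assumes "bounded_clinear_op (T::'a::complex_normed_vector \<Rightarrow> 'a)"
  shows "bounded_clinear_op (T ^^ n)"
proof (induction n)
  case 0
  then show ?case by (simp add: bounded_clinear_op_def id_def)
next
  case (Suc n)
  then show ?case using assms
    by (auto simp: bounded_clinear_op_def intro: bounded_linear_compose)
qed

lemma resolvent_setD:
  assumes "l \<in> resolvent_set T"
  shows "bounded_clinear_op (resolvent l T)" "is_resolvent T l (resolvent l T)"
proof -
  obtain S where S: "bounded_clinear_op S" "is_resolvent T l S"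
    using assms by (auto simp: resolvent_set_def)
  have "resolvent l T = S"
    unfolding resolvent_def
  proof (rule the_equality)
    fix S' assume "is_resolvent T l S'"
    then show "S' = S" using S(2) by (metis is_resolvent_def ext)
  qed (fact S(2))
  with S show "bounded_clinear_op (resolvent l T)" "is_resolvent T l (resolvent l T)" by simp_all
qed

text \<open>The first resolvent identity \<open>R(\<mu>) = R(\<lambda>) - (\<mu> - \<lambda>) R(\<lambda>) R(\<mu>)\<close>, taken in norm.\<close>

lemma onorm_resolvent_perturbation:
  fixes T :: "'a::complex_normed_vector \<Rightarrow> 'a"
  assumes R: "bounded_clinear_op R" "is_resolvent T l R"
    and S: "bounded_clinear_op S" "is_resolvent T m S"
  shows "onorm S \<le> onorm R + cmod (m - l) * onorm R * onorm S"
proof (rule onorm_bound)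
  have lin: "bounded_linear R" "bounded_linear S"
    using R(1) S(1) by (simp_all add: bounded_clinear_op_bounded_linear)
  show "0 \<le> onorm R + cmod (m - l) * onorm R * onorm S"
    using onorm_pos_le[OF lin(1)] onorm_pos_le[OF lin(2)] by simp
  fix x
  have "x = (l *\<^sub>C S x - T (S x)) + (m - l) *\<^sub>C S x"
    using S(2) by (simp add: is_resolvent_def scaleC_diff_left algebra_simps)
  then have "R x = R (l *\<^sub>C S x - T (S x)) + (m - l) *\<^sub>C R (S x)"
    by (metis R(1) bounded_clinear_op_add bounded_clinear_op_scaleC)
  then have "S x = R x - (m - l) *\<^sub>C R (S x)"
    using R(2) by (simp add: is_resolvent_def)
  then have "norm (S x) \<le> norm (R x) + cmod (m - l) * norm (R (S x))"
    by (metis norm_scaleC norm_triangle_ineq4)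
  also have "\<dots> \<le> onorm R * norm x + cmod (m - l) * (onorm R * (onorm S * norm x))"
  proof -
    have "norm (R (S x)) \<le> onorm R * norm (S x)" by (rule onorm[OF lin(1)])
    also have "\<dots> \<le> onorm R * (onorm S * norm x)"
      by (intro mult_left_mono onorm[OF lin(2)] onorm_pos_le[OF lin(1)])
    finally show ?thesis
      by (intro add_mono onorm[OF lin(1)] mult_left_mono) auto
  qed
  finally show "norm (S x) \<le> (onorm R + cmod (m - l) * onorm R * onorm S) * norm x"
    by (simp add: algebra_simps)
qed

lemma continuous_on_onorm_resolvent:
  fixes T :: "'a::complex_normed_vector \<Rightarrow> 'a"
  shows "continuous_on (resolvent_set T) (\<lambda>l. onorm (resolvent l T))"
  unfolding continuous_on_def
proof
  fix l assume l: "l \<in> resolvent_set T"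
  define N where "N = onorm (resolvent l T)"
  have N0: "0 \<le> N"
    unfolding N_def by (intro onorm_pos_le bounded_clinear_op_bounded_linear resolvent_setD l)
  have close: "\<bar>onorm (resolvent m T) - N\<bar> \<le> 2 * N\<^sup>2 * cmod (m - l)"
    if m: "m \<in> resolvent_set T" and small: "cmod (m - l) * N < 1/2" for m
  proof -
    define M where "M = onorm (resolvent m T)"
    have M0: "0 \<le> M"
      unfolding M_def by (intro onorm_pos_le bounded_clinear_op_bounded_linear resolvent_setD m)
    have MN: "M \<le> N + cmod (m - l) * N * M" and NM: "N \<le> M + cmod (m - l) * N * M"
      using onorm_resolvent_perturbation[OF resolvent_setD[OF l] resolvent_setD[OF m]]
        onorm_resolvent_perturbation[OF resolvent_setD[OF m] resolvent_setD[OF l]]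
      by (simp_all add: M_def N_def norm_minus_commute algebra_simps)
    have "cmod (m - l) * N * M \<le> M / 2"
      using mult_right_mono[OF less_imp_le[OF small] M0] by simp
    then have "M \<le> 2 * N" using MN by linarith
    then have "cmod (m - l) * N * M \<le> 2 * N\<^sup>2 * cmod (m - l)"
      using mult_left_mono[of M "2 * N" "cmod (m - l) * N"] N0
      by (simp add: power2_eq_square algebra_simps)
    with MN NM show ?thesis by (simp add: M_def abs_le_iff)
  qed
  have "\<forall>\<^sub>F m in at l within resolvent_set T. cmod (m - l) * N < 1/2"
    by (rule order_tendstoD) (auto intro!: tendsto_eq_intros)
  then have "\<forall>\<^sub>F m in at l within resolvent_set T.
      norm (onorm (resolvent m T) - N) \<le> 2 * N\<^sup>2 * cmod (m - l)"
    by (auto simp: eventually_at_filter elim!: eventually_mono intro: close)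
  then have "((\<lambda>m. onorm (resolvent m T) - N) \<longlongrightarrow> 0) (at l within resolvent_set T)"
    by (rule Lim_null_comparison) (auto intro!: tendsto_eq_intros)
  then show "((\<lambda>m. onorm (resolvent m T)) \<longlongrightarrow> N) (at l within resolvent_set T)"
    by (simp add: Lim_null[of _ N])
qed

lemma norm_cis_minus_one: "cmod (cis t - 1) = 2 * \<bar>sin (t/2)\<bar>"
proof -
  define a where "a = sin (t/2)"
  define b where "b = cos (t/2)"
  have ab: "a\<^sup>2 + b\<^sup>2 = 1" unfolding a_def b_def by simp
  have c: "cos t = 1 - 2 * a\<^sup>2" using cos_double_sin[of "t/2"] by (simp add: a_def)
  have s: "sin t = 2 * a * b" using sin_double[of "t/2"] by (simp add: a_def b_def)
  have "cmod (cis t - 1) = sqrt ((cos t - 1)\<^sup>2 + (sin t)\<^sup>2)"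
    by (simp add: cmod_def)
  also have "(cos t - 1)\<^sup>2 + (sin t)\<^sup>2 = (2 * a)\<^sup>2 * (a\<^sup>2 + b\<^sup>2)"
    unfolding c s by algebra
  finally show ?thesis unfolding ab mult_1_right real_sqrt_abs by (simp add: a_def)
qed

lemma sin_ge_quarter:
  assumes "0 \<le> x" "x \<le> pi/2"
  shows "x / 4 \<le> sin x"
proof -
  have "\<bar>sin x - (\<Sum>m<3. sin_coeff m * x ^ m)\<bar> \<le> inverse (fact 3) * \<bar>x\<bar> ^ 3"
    by (rule Maclaurin_sin_bound)
  moreover have "(\<Sum>m<3. sin_coeff m * x ^ m) = x"
    by (simp add: eval_nat_numeral sin_coeff_def)
  ultimately have "\<bar>sin x - x\<bar> \<le> x^3/6" using assms by (simp add: fact_numeral)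
  then have taylor: "x - x^3/6 \<le> sin x" by linarith
  have "x \<le> 2" using assms pi_less_4 by linarith
  then have "x * (x * x) \<le> x * 4"
    using assms by (intro mult_left_mono) (auto intro: mult_mono[of x 2 x 2, simplified])
  then have "x^3 \<le> 4 * x" by (simp add: power3_eq_cube)
  with taylor assms(1) show ?thesis by linarith
qed

lemma norm_cis_minus_one_ge:
  assumes "\<bar>t\<bar> \<le> pi"
  shows "\<bar>t\<bar> / 4 \<le> cmod (cis t - 1)"
proof -
  have "\<bar>sin (t/2)\<bar> = sin (\<bar>t\<bar>/2)"
  proof (cases "t \<ge> 0")
    case True
    then show ?thesis using assms sin_ge_zero[of "t/2"] by simp
  next
    case False
    then have "\<bar>t\<bar>/2 = - (t/2)" by simp
    then show ?thesis using assms sin_ge_zero[of "\<bar>t\<bar>/2"] by (simp only: sin_minus) simp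
  qed
  moreover have "\<bar>t\<bar> / 8 \<le> sin (\<bar>t\<bar>/2)"
    using sin_ge_quarter[of "\<bar>t\<bar>/2"] assms by simp
  ultimately show ?thesis unfolding norm_cis_minus_one by linarith
qed

lemma cis_in_resolvent_set:
  assumes "spectrum T \<inter> sphere 0 1 = {1}" "0 < \<bar>t\<bar>" "\<bar>t\<bar> \<le> pi"
  shows "cis t \<in> resolvent_set T"
proof -
  have "cis t \<noteq> 1" using norm_cis_minus_one_ge[of t] assms(2,3) by auto
  moreover have "cis t \<in> sphere 0 1" by simp
  ultimately have "cis t \<notin> spectrum T" using assms(1) by blast
  then show ?thesis by (simp add: spectrum_def)
qed

lemma norm_funpow_le:
  fixes T :: "'a::complex_normed_vector \<Rightarrow> 'a"
  assumes "bounded_clinear_op T" "\<And>k. onorm (T ^^ k) \<le> K"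
  shows "norm ((T ^^ n) x) \<le> K * norm x"
  using onorm[OF bounded_clinear_op_bounded_linear[OF bounded_clinear_op_funpow[OF assms(1)]]]
    mult_right_mono[OF assms(2) norm_ge_zero] order_trans by blast

text \<open>Telescoping: \<open>(\<lambda>^k - T^k) R(\<lambda>) = \<Sum>j<k. \<lambda>^(k-1-j) T^j\<close>.\<close>

lemma norm_power_scaleC_resolvent_diff_funpow:
  fixes T :: "'a::complex_normed_vector \<Rightarrow> 'a"
  assumes T: "bounded_clinear_op T" and K: "\<And>k. onorm (T ^^ k) \<le> K"
    and R: "is_resolvent T l R" and l: "cmod l = 1"
  shows "norm (l ^ n *\<^sub>C R x - (T ^^ n) (R x)) \<le> real n * K * norm x"
proof (induction n)
  case 0
  then show ?case by (simp add: scaleC_one)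
next
  case (Suc n)
  have Tn: "bounded_clinear_op (T ^^ n)" by (rule bounded_clinear_op_funpow[OF T])
  have "l *\<^sub>C (T ^^ n) (R x) - (T ^^ n) (T (R x)) = (T ^^ n) (l *\<^sub>C R x - T (R x))"
    by (simp add: bounded_clinear_op_diff[OF Tn] bounded_clinear_op_scaleC[OF Tn])
  also have "\<dots> = (T ^^ n) x" using R by (simp add: is_resolvent_def)
  finally have "l ^ Suc n *\<^sub>C R x - (T ^^ Suc n) (R x)
      = l *\<^sub>C (l ^ n *\<^sub>C R x - (T ^^ n) (R x)) + (T ^^ n) x"
    by (simp add: scaleC_diff_right scaleC_scaleC funpow_swap1 algebra_simps)
  then have "norm (l ^ Suc n *\<^sub>C R x - (T ^^ Suc n) (R x))
      \<le> norm (l ^ n *\<^sub>C R x - (T ^^ n) (R x)) + norm ((T ^^ n) x)"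
    by (metis l mult_1 norm_scaleC norm_triangle_ineq)
  also have "\<dots> \<le> real n * K * norm x + K * norm x"
    using Suc norm_funpow_le[OF T K] by (rule add_mono)
  finally show ?case by (simp add: algebra_simps)
qed

text \<open>The key estimate: writing \<open>(\<lambda> - 1) T\<^sup>n R(\<lambda>) = T\<^sup>n - T\<^sup>n(I - T) R(\<lambda>)\<close>, a small
  \<open>\<parallel>T\<^sup>n(I - T)\<parallel>\<close> controls \<open>T\<^sup>n R(\<lambda>)\<close>, and the telescoping bound transfers this to \<open>R(\<lambda>)\<close>.\<close>

lemma onorm_resolvent_le_of_onorm_funpow_diff:
  fixes T :: "'a::complex_normed_vector \<Rightarrow> 'a"
  assumes T: "bounded_clinear_op T" and K: "\<And>k. onorm (T ^^ k) \<le> K"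
    and R: "bounded_clinear_op R" "is_resolvent T l R"
    and l: "cmod l = 1" "l \<noteq> 1"
    and small: "onorm (\<lambda>y. (T ^^ n) (y - T y)) \<le> cmod (l - 1) / 2"
  shows "onorm R \<le> 2 * K * (real n + 1 / cmod (l - 1))"
proof (rule onorm_bound)
  define \<rho> where "\<rho> = cmod (l - 1)"
  define a where "a = onorm (\<lambda>y. (T ^^ n) (y - T y))"
  have \<rho>0: "\<rho> > 0" using l(2) by (simp add: \<rho>_def)
  have Tn: "bounded_clinear_op (T ^^ n)" by (rule bounded_clinear_op_funpow[OF T])
  have "bounded_linear (\<lambda>y. (T ^^ n) (y - T y))"
    using bounded_linear_compose[OF bounded_clinear_op_bounded_linear[OF Tn]
        bounded_linear_sub[OF bounded_linear_ident bounded_clinear_op_bounded_linear[OF T]]]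
    by simp
  note a = onorm[OF this, folded a_def]
  show "0 \<le> 2 * K * (real n + 1 / \<rho>)"
    using \<rho>0 order_trans[OF onorm_pos_le K] bounded_clinear_op_bounded_linear[OF Tn] by auto
  fix x
  have "R x - T (R x) = x - (l - 1) *\<^sub>C R x"
    using R(2) by (simp add: is_resolvent_def scaleC_diff_left scaleC_one algebra_simps)
  then have "(l - 1) *\<^sub>C (T ^^ n) (R x) = (T ^^ n) x - (T ^^ n) (R x - T (R x))"
    by (simp add: bounded_clinear_op_diff[OF Tn] bounded_clinear_op_scaleC[OF Tn])
  then have "\<rho> * norm ((T ^^ n) (R x)) = norm ((T ^^ n) x - (T ^^ n) (R x - T (R x)))"
    by (metis \<rho>_def norm_scaleC)
  also have "\<dots> \<le> norm ((T ^^ n) x) + norm ((T ^^ n) (R x - T (R x)))"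
    by (rule norm_triangle_ineq4)
  also have "\<dots> \<le> K * norm x + a * norm (R x)"
    by (rule add_mono[OF norm_funpow_le[OF T K] a])
  finally have Tn_R: "\<rho> * norm ((T ^^ n) (R x)) \<le> K * norm x + a * norm (R x)" .
  have "norm (R x) = norm (l ^ n *\<^sub>C R x)" by (simp add: norm_scaleC norm_power l(1))
  also have "\<dots> \<le> norm (l ^ n *\<^sub>C R x - (T ^^ n) (R x)) + norm ((T ^^ n) (R x))"
    by (metis diff_add_cancel norm_triangle_ineq)
  also have "\<dots> \<le> real n * K * norm x + norm ((T ^^ n) (R x))"
    using norm_power_scaleC_resolvent_diff_funpow[OF T K R(2) l(1)] by simp
  finally have "\<rho> * norm (R x) \<le> \<rho> * (real n * K * norm x) + \<rho> * norm ((T ^^ n) (R x))"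
    using \<rho>0 by (simp add: distrib_left[symmetric])
  also have "\<dots> \<le> \<rho> * (real n * K * norm x) + K * norm x + a * norm (R x)"
    using Tn_R by simp
  also have "\<dots> \<le> \<rho> * (real n * K * norm x) + K * norm x + \<rho> / 2 * norm (R x)"
    using mult_right_mono[OF small norm_ge_zero] by (simp add: a_def \<rho>_def)
  finally have "\<rho> / 2 * norm (R x) \<le> \<rho> * real n * K * norm x + K * norm x" by simp
  then show "norm (R x) \<le> 2 * K * (real n + 1 / \<rho>) * norm x"
    using \<rho>0 by (simp add: field_simps)
qed

lemma onorm_resolvent_cis_le:
  fixes T :: "'a::complex_normed_vector \<Rightarrow> 'a"
  assumes T: "bounded_clinear_op T" and K: "\<And>k. onorm (T ^^ k) \<le> K"
    and spec: "spectrum T \<inter> sphere 0 1 = {1}"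
    and \<theta>: "0 < \<theta>" "\<theta> \<le> \<bar>t\<bar>" "\<bar>t\<bar> \<le> pi"
    and small: "onorm (\<lambda>y. (T ^^ n) (y - T y)) \<le> \<theta> / 8"
  shows "onorm (resolvent (cis t) T) \<le> 2 * K * (real n + 4 / \<theta>)"
proof -
  have dist: "\<theta> / 4 \<le> cmod (cis t - 1)" using norm_cis_minus_one_ge[OF \<theta>(3)] \<theta>(2) by linarith
  then have "cis t \<noteq> 1" using \<theta>(1) by auto
  then have "onorm (resolvent (cis t) T) \<le> 2 * K * (real n + 1 / cmod (cis t - 1))"
    using resolvent_setD[OF cis_in_resolvent_set[OF spec]] \<theta> small dist
    by (intro onorm_resolvent_le_of_onorm_funpow_diff[OF T K]) auto
  also have "\<dots> \<le> 2 * K * (real n + 4 / \<theta>)"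
  proof -
    have "0 \<le> K"
      using order_trans[OF onorm_pos_le K]
        bounded_clinear_op_bounded_linear[OF bounded_clinear_op_funpow[OF T]] by blast
    moreover have "1 / cmod (cis t - 1) \<le> 4 / \<theta>"
      using dist \<theta>(1) by (simp add: divide_simps)
    ultimately show ?thesis by (simp add: mult_left_mono)
  qed
  finally show ?thesis .
qed

definition resolvent_norm_pm :: "('a::complex_normed_vector \<Rightarrow> 'a) \<Rightarrow> real \<Rightarrow> real" where
  "resolvent_norm_pm T r = max (onorm (resolvent (cis r) T)) (onorm (resolvent (cis (- r)) T))"

lemma onorm_resolvent_cis_le_resolvent_norm_pm:
  "onorm (resolvent (cis t) T) \<le> resolvent_norm_pm T \<bar>t\<bar>"
  by (cases "t \<ge> 0") (simp_all add: resolvent_norm_pm_def)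

lemma resolvent_norm_pm_nonneg:
  assumes "spectrum T \<inter> sphere 0 1 = {1}" "0 < r" "r \<le> pi"
  shows "0 \<le> resolvent_norm_pm T r"
  unfolding resolvent_norm_pm_def using assms
  by (intro max.coboundedI1 onorm_pos_le bounded_clinear_op_bounded_linear resolvent_setD
      cis_in_resolvent_set) auto

lemma continuous_on_resolvent_norm_pm:
  fixes T :: "'a::complex_normed_vector \<Rightarrow> 'a"
  assumes spec: "spectrum T \<inter> sphere 0 1 = {1}" and "0 < \<delta>"
  shows "continuous_on {\<delta>..pi} (resolvent_norm_pm T)"
proof -
  have cis_mem: "cis t \<in> resolvent_set T" if "\<delta> \<le> \<bar>t\<bar>" "\<bar>t\<bar> \<le> pi" for t
    using cis_in_resolvent_set[OF spec] that \<open>0 < \<delta>\<close> by simp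
  have "cis ` {\<delta>..pi} \<subseteq> resolvent_set T" "(\<lambda>r. cis (- r)) ` {\<delta>..pi} \<subseteq> resolvent_set T"
    using \<open>0 < \<delta>\<close> by (auto intro!: cis_mem)
  then show ?thesis
    unfolding resolvent_norm_pm_def
    by (intro continuous_on_max continuous_on_compose2[OF continuous_on_onorm_resolvent]
        continuous_intros)
qed

lemma resolvent_growth_le:
  assumes "\<theta> \<le> pi" "\<And>r. \<theta> \<le> r \<Longrightarrow> r \<le> pi \<Longrightarrow> resolvent_norm_pm T r \<le> B"
  shows "resolvent_growth T \<theta> \<le> B"
  unfolding resolvent_growth_def
proof (rule cSup_least)
  show "{onorm (resolvent (cis t) T) |t. \<theta> \<le> \<bar>t\<bar> \<and> \<bar>t\<bar> \<le> pi} \<noteq> {}"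
    using assms(1) by (auto intro!: exI[of _ pi])
qed (use assms(2) onorm_resolvent_cis_le_resolvent_norm_pm order_trans in fastforce)

lemma resolvent_growth_eq:
  assumes "0 \<le> \<theta>" "\<theta> \<le> pi"
    and "\<And>r. \<theta> \<le> r \<Longrightarrow> r \<le> pi \<Longrightarrow> resolvent_norm_pm T r \<le> resolvent_norm_pm T \<theta>"
  shows "resolvent_growth T \<theta> = resolvent_norm_pm T \<theta>"
  unfolding resolvent_growth_def
proof (rule cSup_eq_maximum)
  show "resolvent_norm_pm T \<theta> \<in> {onorm (resolvent (cis t) T) |t. \<theta> \<le> \<bar>t\<bar> \<and> \<bar>t\<bar> \<le> pi}"
    unfolding resolvent_norm_pm_def max_def using assms(1,2) by auto
qed (use assms(3) onorm_resolvent_cis_le_resolvent_norm_pm order_trans in fastforce)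

text \<open>Take \<open>\<theta>\<close> maximal with \<open>resolvent_norm_pm T \<theta> \<ge> s\<close>; continuity from the right forces
  equality, and maximality makes \<open>\<theta>\<close> a maximiser on \<open>[\<theta>, \<pi>]\<close>.\<close>

lemma resolvent_growth_attains:
  fixes T :: "'a::complex_normed_vector \<Rightarrow> 'a"
  assumes spec: "spectrum T \<inter> sphere 0 1 = {1}" and \<delta>: "0 < \<delta>" "\<delta> \<le> pi"
    and s: "resolvent_norm_pm T pi < s" "s \<le> resolvent_norm_pm T \<delta>"
  shows "\<exists>\<theta>\<in>{\<delta>..pi}. resolvent_growth T \<theta> = s"
proof -
  let ?h = "resolvent_norm_pm T"
  have cont: "continuous_on {\<delta>..pi} ?h" by (rule continuous_on_resolvent_norm_pm[OF spec \<delta>(1)])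
  define B where "B = {r \<in> {\<delta>..pi}. s \<le> ?h r}"
  have "compact B"
    unfolding B_def compact_eq_bounded_closed
    by (intro conjI bounded_subset[OF bounded_closed_interval] continuous_on_closed_Collect_le
        cont continuous_on_const) auto
  moreover have "B \<noteq> {}" using \<delta> s(2) by (auto simp: B_def)
  ultimately obtain \<theta> where \<theta>: "\<theta> \<in> B" and max: "\<And>r. r \<in> B \<Longrightarrow> r \<le> \<theta>"
    by (metis compact_attains_sup)
  have "\<theta> \<noteq> pi" using \<theta> s(1) by (auto simp: B_def)
  with \<theta> have \<theta>_pi: "\<delta> \<le> \<theta>" "\<theta> < pi" by (auto simp: B_def)
  have above: "?h r < s" if "\<theta> < r" "r \<le> pi" for r
  proof (rule ccontr)
    assume "\<not> ?h r < s"
    then have "r \<in> B" using that \<theta>_pi by (simp add: B_def)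
    then show False using max[of r] that(1) by simp
  qed
  have "?h \<theta> \<le> s"
  proof (rule tendsto_upperbound)
    have "(?h \<longlongrightarrow> ?h \<theta>) (at \<theta> within {\<delta>..pi})"
      using cont \<theta>_pi by (simp add: continuous_on_def)
    then show "(?h \<longlongrightarrow> ?h \<theta>) (at \<theta> within {\<theta><..pi})"
      by (rule tendsto_within_subset) (use \<theta>_pi in auto)
    show "\<forall>\<^sub>F r in at \<theta> within {\<theta><..pi}. ?h r \<le> s"
      unfolding eventually_at_filter by (intro always_eventually allI impI) (simp add: less_imp_le above)
    have "{\<theta><..pi} - {\<theta>} = {\<theta><..pi}" by auto
    then show "at \<theta> within {\<theta><..pi} \<noteq> bot"
      using \<theta>_pi by (simp add: at_within_eq_bot_iff)
  qed
  then have "?h \<theta> = s" using \<theta> by (simp add: B_def)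
  moreover have "resolvent_growth T \<theta> = ?h \<theta>"
    using \<theta>_pi \<delta>(1) above \<open>?h \<theta> = s\<close>
    by (intro resolvent_growth_eq) (auto simp: order.order_iff_strict)
  ultimately show ?thesis using \<theta>_pi by auto
qed

lemma filterlim_resolvent_norm_pm_at_right_0:
  fixes T :: "'a::complex_normed_vector \<Rightarrow> 'a"
  assumes spec: "spectrum T \<inter> sphere 0 1 = {1}"
    and blowup: "filterlim (\<lambda>\<theta>::real. max (onorm (\<lambda>x. \<theta> *\<^sub>R resolvent (cis \<theta>) T x))
                                         (onorm (\<lambda>x. \<theta> *\<^sub>R resolvent (cis (- \<theta>)) T x)))
                   at_top (at 0)"
  shows "filterlim (\<lambda>r. r * resolvent_norm_pm T r) at_top (at_right 0)"
proof -
  have "max (onorm (\<lambda>x. r *\<^sub>R resolvent (cis r) T x)) (onorm (\<lambda>x. r *\<^sub>R resolvent (cis (- r)) T x))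
      = r * resolvent_norm_pm T r" if "r \<in> {0<..<pi}" for r
  proof -
    have "bounded_linear (resolvent (cis r) T)" "bounded_linear (resolvent (cis (- r)) T)"
      using that by (auto intro!: bounded_clinear_op_bounded_linear resolvent_setD
          cis_in_resolvent_set[OF spec])
    then show ?thesis
      using that by (simp add: onorm_scaleR resolvent_norm_pm_def max_mult_distrib_left)
  qed
  then have "\<forall>\<^sub>F r in at_right 0.
      max (onorm (\<lambda>x. r *\<^sub>R resolvent (cis r) T x)) (onorm (\<lambda>x. r *\<^sub>R resolvent (cis (- r)) T x))
      = r * resolvent_norm_pm T r"
    by (intro eventually_at_rightI[OF _ pi_gt_zero])
  moreover have "filterlim (\<lambda>\<theta>::real. max (onorm (\<lambda>x. \<theta> *\<^sub>R resolvent (cis \<theta>) T x))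
      (onorm (\<lambda>x. \<theta> *\<^sub>R resolvent (cis (- \<theta>)) T x))) at_top (at_right 0)"
    by (rule filterlim_mono[OF blowup order_refl at_le]) simp
  ultimately show ?thesis by (rule filterlim_cong[THEN iffD1, rotated 2]) simp_all
qed

lemma resolvent_growth_onto_large:
  fixes T :: "'a::complex_normed_vector \<Rightarrow> 'a"
  assumes spec: "spectrum T \<inter> sphere 0 1 = {1}"
    and blowup: "filterlim (\<lambda>r. r * resolvent_norm_pm T r) at_top (at_right 0)"
    and s: "resolvent_norm_pm T pi < s"
  shows "s \<in> resolvent_growth T ` {0<..pi}"
proof -
  have "\<forall>\<^sub>F r in at_right 0. s * pi < r * resolvent_norm_pm T r"
    using blowup by (simp add: filterlim_at_top_dense)
  moreover have "\<forall>\<^sub>F r in at_right (0::real). r \<in> {0<..<pi}"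
    by (intro eventually_at_rightI[OF _ pi_gt_zero])
  ultimately have "\<forall>\<^sub>F r in at_right 0. s * pi < r * resolvent_norm_pm T r \<and> r \<in> {0<..<pi}"
    by (rule eventually_conj)
  then obtain r where r: "s * pi < r * resolvent_norm_pm T r" "0 < r" "r < pi"
    using eventually_happens'[OF trivial_limit_at_right_real] by auto
  have "0 < s" using s resolvent_norm_pm_nonneg[OF spec pi_gt_zero] by simp
  then have "r * s < s * pi" using mult_strict_right_mono[OF r(3)] by simp
  then have "r * s < r * resolvent_norm_pm T r" using r(1) by linarith
  then have "s \<le> resolvent_norm_pm T r" using r(2) by simp
  then obtain \<theta> where "\<theta> \<in> {r..pi}" "resolvent_growth T \<theta> = s"
    using resolvent_growth_attains[OF spec r(2) _ s] r(3) by auto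
  then show ?thesis using r(2) by force
qed

lemma small_onorm_funpow_diff_bounds:
  fixes T :: "'a::complex_normed_vector \<Rightarrow> 'a"
  assumes T: "bounded_clinear_op T" and K: "\<And>k. onorm (T ^^ k) \<le> K" "0 < K"
    and spec: "spectrum T \<inter> sphere 0 1 = {1}"
    and \<theta>: "0 < \<theta>" "\<theta> \<le> pi" "resolvent_growth T \<theta> = 4 * K * real n"
    and small: "onorm (\<lambda>y. (T ^^ n) (y - T y)) \<le> \<theta> / 8"
  shows "real n * \<theta> \<le> 4" and "\<theta> * resolvent_norm_pm T \<theta> \<le> 16 * K"
proof -
  have bound: "resolvent_norm_pm T r \<le> 2 * K * (real n + 4 / \<theta>)" if "\<theta> \<le> r" "r \<le> pi" for r
    unfolding resolvent_norm_pm_def using that \<theta>(1)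
    by (intro max.boundedI onorm_resolvent_cis_le[OF T K(1) spec \<theta>(1) _ _ small]) auto
  have "4 * K * real n \<le> 2 * K * (real n + 4 / \<theta>)"
    using resolvent_growth_le[OF \<theta>(2) bound] \<theta>(3) by simp
  then have "K * (real n * \<theta>) \<le> K * 4" using \<theta>(1) by (simp add: field_simps)
  then show n\<theta>: "real n * \<theta> \<le> 4" using K(2) mult_le_cancel_left_pos by blast
  have "\<theta> * resolvent_norm_pm T \<theta> \<le> \<theta> * (2 * K * (real n + 4 / \<theta>))"
    using bound[of \<theta>] \<theta> by simp
  also have "\<dots> = 2 * K * (real n * \<theta>) + 8 * K" using \<theta>(1) by (simp add: field_simps)
  also have "\<dots> \<le> 16 * K" using mult_left_mono[OF n\<theta>, of "2 * K"] K(2) by linarith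
  finally show "\<theta> * resolvent_norm_pm T \<theta> \<le> 16 * K" .
qed

theorem corollary2p6:
  fixes T :: "'a::complex_banach \<Rightarrow> 'a"
    and minv :: "real \<Rightarrow> real"
  assumes T_op: "bounded_clinear_op T"
    and pb: "power_bounded T"
    and spec: "spectrum T \<inter> sphere 0 1 = {1}"
    and blowup: "filterlim (\<lambda>\<theta>::real. max (onorm (\<lambda>x. \<theta> *\<^sub>R resolvent (cis \<theta>) T x))
                                         (onorm (\<lambda>x. \<theta> *\<^sub>R resolvent (cis (- \<theta>)) T x)))
                   at_top (at 0)"
    and minv: "\<forall>s \<in> resolvent_growth T ` {0<..pi}.
                 minv s \<in> {0<..pi} \<and> resolvent_growth T (minv s) = s"
  shows "\<exists>c C. c > 0 \<and> C > 0 \<and>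
           (\<forall>\<^sub>F n in sequentially. onorm (\<lambda>x. (T ^^ n) (x - T x)) \<ge> c * minv (C * real n))"
proof -
  obtain M where "\<And>k. onorm (T ^^ k) \<le> M" using pb by (auto simp: power_bounded_def)
  then have "\<And>k. onorm (T ^^ k) \<le> max M 1" "0 < max M 1" by (auto simp: le_max_iff_disj)
  then obtain K where K: "\<And>k. onorm (T ^^ k) \<le> K" "0 < K" by blast
  have blowup': "filterlim (\<lambda>r. r * resolvent_norm_pm T r) at_top (at_right 0)"
    by (rule filterlim_resolvent_norm_pm_at_right_0[OF spec blowup])
  then obtain \<delta> where \<delta>: "0 < \<delta>" "\<And>r. 0 < r \<Longrightarrow> r < \<delta> \<Longrightarrow> 16 * K < r * resolvent_norm_pm T r"
    by (auto simp: filterlim_at_top_dense eventually_at_right_field)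
  have "\<forall>\<^sub>F n in sequentially. resolvent_norm_pm T pi / (4 * K) < real n \<and> 4 / \<delta> < real n"
    using filterlim_real_sequentially by (auto simp: filterlim_at_top_dense intro!: eventually_conj)
  then have "\<forall>\<^sub>F n in sequentially. resolvent_norm_pm T pi < 4 * K * real n \<and> 4 < \<delta> * real n"
    by (rule eventually_mono) (use K(2) \<delta>(1) in \<open>simp add: pos_divide_less_eq mult.commute\<close>)
  then have "\<forall>\<^sub>F n in sequentially. onorm (\<lambda>x. (T ^^ n) (x - T x)) \<ge> 1/8 * minv (4 * K * real n)"
  proof (rule eventually_mono)
    fix n assume n: "resolvent_norm_pm T pi < 4 * K * real n \<and> 4 < \<delta> * real n"
    define \<theta> where "\<theta> = minv (4 * K * real n)"
    have "4 * K * real n \<in> resolvent_growth T ` {0<..pi}"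
      using resolvent_growth_onto_large[OF spec blowup'] n by blast
    with minv have \<theta>: "\<theta> \<in> {0<..pi}" "resolvent_growth T \<theta> = 4 * K * real n"
      unfolding \<theta>_def by blast+
    show "onorm (\<lambda>x. (T ^^ n) (x - T x)) \<ge> 1/8 * minv (4 * K * real n)"
    proof (rule ccontr)
      assume "\<not> ?thesis"
      then have "real n * \<theta> \<le> 4" "\<theta> * resolvent_norm_pm T \<theta> \<le> 16 * K"
        using small_onorm_funpow_diff_bounds[OF T_op K spec, of \<theta> n] \<theta> by (auto simp: \<theta>_def)
      moreover from this(1) n have "real n * \<theta> < real n * \<delta>"
        by (metis mult.commute order_le_less_trans)
      then have "\<theta> < \<delta>" by (simp add: mult_less_cancel_left)
      ultimately show False using \<delta>(2)[of \<theta>] \<theta>(1) by simp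
    qed
  qed
  then show ?thesis using K(2) by (intro exI[of _ "1/8"] exI[of _ "4 * K"]) auto
qed

end
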